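(* Let $n_1,\dots,n_s\ge0$, $A=\mathrm{diag}(\mathbb{J}_{1,n_1}(0),\dots,\mathbb{J}_{s,n_s}(0))$, and let $B$ satisfy $AB+BA=0$. Write $B=(B_{ij})_{1\le i,j\le s}$ in the block form of $A$ ($B_{ij}$ of size $in_i\times jn_j$), so that $B_{ij}=\mathrm{LB}^-(i,j,(B^{(1)}_{ij},\dots,B^{(\min(i,j))}_{ij}))$ with $n_i\times n_j$ matrices $B^{(k)}_{ij}$. Then: (1) $B$ is similar to a block upper-triangular matrix whose diagonal blocks are, up to order, the matrices $B^{(1)}_{ii}$ (each appearing $\lceil i/2\rceil$ times) and $-B^{(1)}_{ii}$ (each appearing $\lfloor i/2\rfloor$ times), $1\le i\le s$; (2) $\chi^B(X)=\prod_{i=1}^s\chi^{B_{ii}}(X)$; (3) $\chi^B(X)=\prod_{i=1}^s\big(\chi^{B^{(1)}_{ii}}(X)\big)^{\lceil i/2\rceil}\big(\chi^{-B^{(1)}_{ii}}(X)\big)^{\lfloor i/2\rfloor}$.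
   Context: $\chi^M(X)$ is the characteristic polynomial of a square matrix $M$. $\mathbb{J}_{i,k}(0)$ is the $i\times i$ block matrix with $k\times k$ blocks whose $(l,l+1)$ blocks are $I_k$ ($1\le l\le i-1$) and all other blocks $0$. For matrices $C_1,\dots,C_k$ of the same size, $k=\min(s,t)$, the $s\times t$ block matrix $\mathrm{LB}^-(s,t,(C_1,\dots,C_k))$ is: if $s\ge t$, block $(i,j)$ is $(-1)^{i-1}C_{j-i+1}$ for $1\le i\le j\le t$ and $0$ otherwise; if $s\le t$, block $(i,t-s+j)$ is $(-1)^{i-1}C_{j-i+1}$ for $1\le i\le j\le s$ and all other blocks are $0$. (Every $B$ anti-commuting with $A$ has this block form.) *)

theory Defs
  imports "Jordan_Normal_Form.Jordan_Normal_Form" "HOL-Library.Multiset"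
begin

text \<open>The i x i block matrix with k x k blocks, identity blocks at block
positions (l,l+1), zero elsewhere; i.e. entry (r,c) is 1 iff c = r + k.\<close>
definition J_blk :: "nat \<Rightarrow> nat \<Rightarrow> 'a :: {zero,one} mat" where
  "J_blk i k = mat (i*k) (i*k) (\<lambda>(r,c). if c = r + k then 1 else 0)"

definition A_mat :: "nat \<Rightarrow> (nat \<Rightarrow> nat) \<Rightarrow> 'a :: {zero,one} mat" where
  "A_mat s n = diag_block_mat (map (\<lambda>i. J_blk i (n i)) [1..<s+1])"

definition tot_size :: "nat \<Rightarrow> (nat \<Rightarrow> nat) \<Rightarrow> nat" where
  "tot_size s n = (\<Sum>i\<in>{1..s}. i * n i)"

definition blk_off :: "(nat \<Rightarrow> nat) \<Rightarrow> nat \<Rightarrow> nat" where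
  "blk_off n i = (\<Sum>j\<in>{1..<i}. j * n j)"

definition blk :: "'a mat \<Rightarrow> nat \<Rightarrow> nat \<Rightarrow> nat \<Rightarrow> nat \<Rightarrow> 'a mat" where
  "blk M r c h w = mat h w (\<lambda>(i,j). M $$ (r+i, c+j))"

text \<open>Diagonal block B_ii (size i n_i) and B_ii^(1) (its top-left n_i x n_i block).\<close>
definition B_diag :: "'a mat \<Rightarrow> (nat \<Rightarrow> nat) \<Rightarrow> nat \<Rightarrow> 'a mat" where
  "B_diag B n i = blk B (blk_off n i) (blk_off n i) (i * n i) (i * n i)"

definition B_one :: "'a mat \<Rightarrow> (nat \<Rightarrow> nat) \<Rightarrow> nat \<Rightarrow> 'a mat" where
  "B_one B n i = blk B (blk_off n i) (blk_off n i) (n i) (n i)"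

definition block_upper_tri :: "'a :: zero mat \<Rightarrow> 'a mat list \<Rightarrow> bool" where
  "block_upper_tri T Ds \<longleftrightarrow>
     (\<forall>D\<in>set Ds. D \<in> carrier_mat (dim_row D) (dim_row D)) \<and>
     (let d = \<lambda>p. dim_row (Ds ! p); ofs = \<lambda>p. sum_list (map dim_row (take p Ds)) in
       T \<in> carrier_mat (sum_list (map dim_row Ds)) (sum_list (map dim_row Ds)) \<and>
       (\<forall>p<length Ds. blk T (ofs p) (ofs p) (d p) (d p) = Ds ! p) \<and>
       (\<forall>p<length Ds. \<forall>q<p. blk T (ofs p) (ofs q) (d p) (d q) = 0\<^sub>m (d p) (d q)))"

end

theory Submission
  imports Defs
begin

(* Index the rows and columns of A by triples (i, l, a): coordinate a of the sub-block l of the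
   diagonal block J_{i,n_i}(0). Entrywise, A B + B A = 0 says that shifting both sub-block indices
   by one flips the sign of an entry of B, and that B vanishes on the first sub-block column and
   the last sub-block row of every block. Hence B(i,l,a; j,m,c) = 0 unless l <= m and
   l + j <= m + i, and B(i,l,a; i,l,c) = (-1)^l B^(1)_ii(a,c). Listing the sub-blocks (i, l) by
   increasing 2 l - i therefore conjugates B by a permutation into a block upper triangular matrix
   with diagonal blocks (-1)^l B^(1)_ii, which gives (1) and (3). The diagonal block B_ii satisfies
   the same relations for the single block i, so (3) applied to it gives (2). *)

lemma sum_list_take_nth_le:
  assumes "p < length xs"
  shows "sum_list (map f (take p xs)) + f (xs ! p) \<le> sum_list (map f xs :: nat list)"
proof -
  have "take (Suc p) xs = take p xs @ [xs ! p]"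
    using assms by (simp add: take_Suc_conv_app_nth)
  then have "sum_list (map f (take p xs)) + f (xs ! p) = sum_list (map f (take (Suc p) xs))"
    by simp
  also have "\<dots> \<le> sum_list (map f xs)"
    by (metis append_take_drop_id le_add1 map_append sum_list_append)
  finally show ?thesis .
qed

lemma obtain_block_containing:
  assumes "(r :: nat) < sum_list (map f xs)"
  obtains p where "p < length xs" "sum_list (map f (take p xs)) \<le> r"
    "r < sum_list (map f (take p xs)) + f (xs ! p)"
proof -
  have "\<exists>p < length xs. sum_list (map f (take p xs)) \<le> r \<and> r < sum_list (map f (take p xs)) + f (xs ! p)"
    using assms
  proof (induction xs arbitrary: r)
    case (Cons x xs)
    show ?case
    proof (cases "r < f x")
      case True
      then show ?thesis by (intro exI[of _ 0]) simp
    next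
      case False
      then have "r - f x < sum_list (map f xs)" using Cons.prems by simp
      then obtain p where "p < length xs" "sum_list (map f (take p xs)) \<le> r - f x"
        "r - f x < sum_list (map f (take p xs)) + f (xs ! p)"
        using Cons.IH by blast
      then show ?thesis using False by (intro exI[of _ "Suc p"]) auto
    qed
  qed simp
  then show thesis using that by blast
qed

lemma nth_concat_sum_list_take:
  "p < length xss \<Longrightarrow> a < length (xss ! p) \<Longrightarrow>
    concat xss ! (sum_list (map length (take p xss)) + a) = xss ! p ! a"
proof (induction xss arbitrary: p)
  case (Cons xs xss)
  then show ?case by (cases p) (auto simp: nth_append add.assoc)
qed simp

lemma mult_add_eq_iff:
  fixes a b k l q :: nat
  assumes "a < k" "b < k"
  shows "q * k + b = l * k + a \<longleftrightarrow> q = l \<and> b = a"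
proof
  assume eq: "q * k + b = l * k + a"
  have "q = (q * k + b) div k" "b = (q * k + b) mod k" "l = (l * k + a) div k" "a = (l * k + a) mod k"
    using assms by auto
  then show "q = l \<and> b = a" using eq by metis
qed simp

lemma mult_add_less:
  fixes a k l i :: nat
  shows "l < i \<Longrightarrow> a < k \<Longrightarrow> l * k + a < i * k"
  by (metis add_less_cancel_left less_le_trans mult_Suc mult_le_mono1 Suc_leI add.commute)

section \<open>Block upper triangular matrices\<close>

lemma char_poly_four_block_mat_lower_left_zero:
  fixes A1 :: "'a :: field mat"
  assumes A1: "A1 \<in> carrier_mat k k" and A2: "A2 \<in> carrier_mat k m" and A4: "A4 \<in> carrier_mat m m"
  shows "char_poly (four_block_mat A1 A2 (0\<^sub>m m k) A4) = char_poly A1 * char_poly A4"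
proof -
  have "char_poly_matrix (four_block_mat A1 A2 (0\<^sub>m m k) A4) =
     four_block_mat (char_poly_matrix A1) (map_mat (\<lambda>a. [:- a:]) A2) (0\<^sub>m m k) (char_poly_matrix A4)"
    using A1 A2 A4 by (intro eq_matI) (auto simp: char_poly_matrix_def)
  then show ?thesis
    unfolding char_poly_def by (simp add: det_four_block_mat_lower_left_zero[of _ k _ m] A1 A2 A4)
qed

lemma char_poly_carrier_0: "A \<in> carrier_mat 0 0 \<Longrightarrow> char_poly (A :: 'a :: field mat) = 1"
  unfolding char_poly_def by (subst det_def) (auto simp: char_poly_matrix_def)

lemma blk_blk:
  "r' + h' \<le> h \<Longrightarrow> c' + w' \<le> w \<Longrightarrow> blk (blk M r c h w) r' c' h' w' = blk M (r + r') (c + c') h' w'"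
  unfolding blk_def by (intro eq_matI) (auto simp: add.assoc)

lemma four_block_mat_blk:
  assumes "T \<in> carrier_mat (d + m) (d + m)"
  shows "T = four_block_mat (blk T 0 0 d d) (blk T 0 d d m) (blk T d 0 m d) (blk T d d m m)"
  using assms by (intro eq_matI) (auto simp: blk_def)

lemma block_upper_triD:
  assumes "block_upper_tri T Ds"
  defines "ofs p \<equiv> sum_list (map dim_row (take p Ds))"
  shows "D \<in> set Ds \<Longrightarrow> D \<in> carrier_mat (dim_row D) (dim_row D)"
    and "T \<in> carrier_mat (sum_list (map dim_row Ds)) (sum_list (map dim_row Ds))"
    and "p < length Ds \<Longrightarrow> blk T (ofs p) (ofs p) (dim_row (Ds ! p)) (dim_row (Ds ! p)) = Ds ! p"
    and "p < length Ds \<Longrightarrow> q < p \<Longrightarrow>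
      blk T (ofs p) (ofs q) (dim_row (Ds ! p)) (dim_row (Ds ! q)) = 0\<^sub>m (dim_row (Ds ! p)) (dim_row (Ds ! q))"
  using assms unfolding block_upper_tri_def Let_def ofs_def by simp_all

lemma block_upper_tri_Cons_lower_left:
  assumes T: "block_upper_tri T (D # Ds)"
  defines "d \<equiv> dim_row D" and "m \<equiv> sum_list (map dim_row Ds)"
  shows "blk T d 0 m d = 0\<^sub>m m d"
proof (rule eq_matI)
  let ?ofs = "\<lambda>p. sum_list (map dim_row (take p Ds))"
  fix r c assume "r < dim_row (0\<^sub>m m d :: 'a mat)" "c < dim_col (0\<^sub>m m d :: 'a mat)"
  then have r: "r < m" and c: "c < d" by auto
  obtain p where p: "p < length Ds" "?ofs p \<le> r" "r < ?ofs p + dim_row (Ds ! p)"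
    using obtain_block_containing r unfolding m_def by blast
  have "blk T (d + ?ofs p) 0 (dim_row (Ds ! p)) d = 0\<^sub>m (dim_row (Ds ! p)) d"
    using block_upper_triD(4)[OF T, of "Suc p" 0] p(1) unfolding d_def by simp
  from arg_cong[OF this, of "\<lambda>M. M $$ (r - ?ofs p, c)"]
  show "blk T d 0 m d $$ (r, c) = 0\<^sub>m m d $$ (r, c)"
    using p r c unfolding blk_def by simp
qed (simp_all add: blk_def)

lemma block_upper_tri_Cons:
  assumes T: "block_upper_tri T (D # Ds)"
  defines "d \<equiv> dim_row D" and "m \<equiv> sum_list (map dim_row Ds)"
  shows "T = four_block_mat D (blk T 0 d d m) (0\<^sub>m m d) (blk T d d m m)"
    and "block_upper_tri (blk T d d m m) Ds"
proof -
  let ?ofs = "\<lambda>p. sum_list (map dim_row (take p Ds))"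
  have "T \<in> carrier_mat (d + m) (d + m)"
    using block_upper_triD(2)[OF T] unfolding d_def m_def by simp
  moreover have "blk T 0 0 d d = D"
    using block_upper_triD(3)[OF T, of 0] unfolding d_def by simp
  ultimately show "T = four_block_mat D (blk T 0 d d m) (0\<^sub>m m d) (blk T d d m m)"
    using four_block_mat_blk block_upper_tri_Cons_lower_left[OF T] unfolding d_def m_def by metis
  have fits: "?ofs p + dim_row (Ds ! p) \<le> m" if "p < length Ds" for p
    using sum_list_take_nth_le[OF that] unfolding m_def .
  show "block_upper_tri (blk T d d m m) Ds"
    unfolding block_upper_tri_def Let_def
  proof (intro conjI allI impI ballI)
    show "D' \<in> carrier_mat (dim_row D') (dim_row D')" if "D' \<in> set Ds" for D'
      using block_upper_triD(1)[OF T] that by simp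
    show "blk T d d m m \<in> carrier_mat (sum_list (map dim_row Ds)) (sum_list (map dim_row Ds))"
      unfolding blk_def m_def by simp
  next
    fix p assume p: "p < length Ds"
    have "blk T (d + ?ofs p) (d + ?ofs p) (dim_row (Ds ! p)) (dim_row (Ds ! p)) = Ds ! p"
      using block_upper_triD(3)[OF T, of "Suc p"] p unfolding d_def by simp
    then show "blk (blk T d d m m) (?ofs p) (?ofs p) (dim_row (Ds ! p)) (dim_row (Ds ! p)) = Ds ! p"
      using blk_blk[OF fits[OF p] fits[OF p], of T d d] by simp
  next
    fix p q assume p: "p < length Ds" and q: "q < p"
    have "blk T (d + ?ofs p) (d + ?ofs q) (dim_row (Ds ! p)) (dim_row (Ds ! q))
        = 0\<^sub>m (dim_row (Ds ! p)) (dim_row (Ds ! q))"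
      using block_upper_triD(4)[OF T, of "Suc p" "Suc q"] p q unfolding d_def by simp
    then show "blk (blk T d d m m) (?ofs p) (?ofs q) (dim_row (Ds ! p)) (dim_row (Ds ! q)) =
        0\<^sub>m (dim_row (Ds ! p)) (dim_row (Ds ! q))"
      using blk_blk[OF fits[OF p] fits, of q T d d] p q by simp
  qed
qed

lemma char_poly_block_upper_tri:
  "block_upper_tri (T :: 'a :: field mat) Ds \<Longrightarrow> char_poly T = prod_list (map char_poly Ds)"
proof (induction Ds arbitrary: T)
  case Nil
  then show ?case using block_upper_triD(2)[OF Nil] by (simp add: char_poly_carrier_0)
next
  case (Cons D Ds)
  let ?d = "dim_row D" and ?m = "sum_list (map dim_row Ds)"
  have D: "D \<in> carrier_mat ?d ?d"
    using block_upper_triD(1)[OF Cons.prems] by simp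
  have "char_poly T = char_poly (four_block_mat D (blk T 0 ?d ?d ?m) (0\<^sub>m ?m ?d) (blk T ?d ?d ?m ?m))"
    using block_upper_tri_Cons(1)[OF Cons.prems] by (rule arg_cong)
  also have "\<dots> = char_poly D * char_poly (blk T ?d ?d ?m ?m)"
    by (rule char_poly_four_block_mat_lower_left_zero[OF D]) (simp_all add: blk_def)
  finally show ?case using Cons.IH[OF block_upper_tri_Cons(2)[OF Cons.prems]] by simp
qed

definition perm_mat :: "nat \<Rightarrow> nat list \<Rightarrow> 'a :: {zero,one} mat" where
  "perm_mat N xs = mat N N (\<lambda>(i, j). if j = xs ! i then 1 else 0)"

lemma perm_mat_mult_index:
  fixes M :: "'a :: semiring_1 mat"
  assumes "M \<in> carrier_mat N N" "i < N" "j < N" "xs ! i < N"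
  shows "(perm_mat N xs * M) $$ (i, j) = M $$ (xs ! i, j)"
proof -
  have "(perm_mat N xs * M) $$ (i, j) = (\<Sum>k<N. (if k = xs ! i then 1 else 0) * M $$ (k, j))"
    using assms by (simp add: perm_mat_def scalar_prod_def atLeast0LessThan)
  also have "\<dots> = (\<Sum>k<N. if k = xs ! i then M $$ (k, j) else 0)"
    by (rule sum.cong) auto
  also have "\<dots> = M $$ (xs ! i, j)"
    using assms(4) by simp
  finally show ?thesis .
qed

lemma mult_transpose_perm_mat_index:
  fixes M :: "'a :: semiring_1 mat"
  assumes "M \<in> carrier_mat N N" "i < N" "j < N" "xs ! j < N"
  shows "(M * transpose_mat (perm_mat N xs)) $$ (i, j) = M $$ (i, xs ! j)"
proof -
  have "(M * transpose_mat (perm_mat N xs)) $$ (i, j) =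
      (\<Sum>k<N. M $$ (i, k) * (if k = xs ! j then 1 else 0))"
    using assms by (simp add: perm_mat_def scalar_prod_def atLeast0LessThan)
  also have "\<dots> = M $$ (i, xs ! j)"
    using assms(4) by (simp add: if_distrib cong: if_cong)
  finally show ?thesis .
qed

lemma perm_mat_mult_transpose:
  assumes xs: "distinct xs" "set xs = {0..<N}"
  shows "perm_mat N xs * transpose_mat (perm_mat N xs) = (1\<^sub>m N :: 'a :: semiring_1 mat)"
proof (rule eq_matI)
  let ?P = "perm_mat N xs :: 'a mat"
  have len: "length xs = N"
    using distinct_card[OF xs(1)] xs(2) by simp
  fix i j assume "i < dim_row (1\<^sub>m N :: 'a mat)" "j < dim_col (1\<^sub>m N :: 'a mat)"
  then have ij: "i < N" "j < N" by auto
  moreover have "xs ! i < N"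
    using nth_mem[of i xs] ij len xs(2) by auto
  ultimately have "(?P * transpose_mat ?P) $$ (i, j) = (if xs ! i = xs ! j then 1 else 0)"
    by (subst perm_mat_mult_index) (auto simp: perm_mat_def)
  then show "(?P * transpose_mat ?P) $$ (i, j) = 1\<^sub>m N $$ (i, j)"
    using ij nth_eq_iff_index_eq[OF xs(1)] len by simp
qed (auto simp: perm_mat_def)

lemma similar_mat_reindex:
  fixes B :: "'a :: field mat"
  assumes B: "B \<in> carrier_mat N N" and xs: "distinct xs" "set xs = {0..<N}"
  shows "similar_mat B (mat N N (\<lambda>(i, j). B $$ (xs ! i, xs ! j)))"
proof -
  let ?P = "perm_mat N xs :: 'a mat"
  have P: "?P \<in> carrier_mat N N" "transpose_mat ?P \<in> carrier_mat N N"
    unfolding perm_mat_def by auto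
  have xs_lt: "xs ! i < N" if "i < N" for i
    using nth_mem[of i xs] that distinct_card[OF xs(1)] xs(2) by auto
  have "mat N N (\<lambda>(i, j). B $$ (xs ! i, xs ! j)) = ?P * B * transpose_mat ?P"
  proof (rule eq_matI)
    fix i j assume "i < dim_row (?P * B * transpose_mat ?P)" "j < dim_col (?P * B * transpose_mat ?P)"
    then have ij: "i < N" "j < N"
      using P by auto
    have "(?P * B * transpose_mat ?P) $$ (i, j) = (?P * B) $$ (i, xs ! j)"
      using mult_transpose_perm_mat_index[OF mult_carrier_mat[OF P(1) B] ij xs_lt[OF ij(2)]] .
    also have "\<dots> = B $$ (xs ! i, xs ! j)"
      using perm_mat_mult_index[OF B ij(1) xs_lt[OF ij(2)] xs_lt[OF ij(1)]] .
    finally show "mat N N (\<lambda>(i, j). B $$ (xs ! i, xs ! j)) $$ (i, j) = (?P * B * transpose_mat ?P) $$ (i, j)"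
      using ij by simp
  qed (use P in auto)
  then have "similar_mat (mat N N (\<lambda>(i, j). B $$ (xs ! i, xs ! j))) B"
    using B P perm_mat_mult_transpose[OF xs] mat_mult_left_right_inverse[OF P perm_mat_mult_transpose[OF xs]]
    by (intro similar_matI[of _ _ ?P "transpose_mat ?P" N]) auto
  then show ?thesis
    by (rule similar_mat_sym)
qed

lemma reindex_concat_entry:
  assumes "length (concat bs) = N"
    and "p < length bs" "a < length (bs ! p)" "q < length bs" "c < length (bs ! q)"
  shows "mat N N (\<lambda>(i, j). B $$ (concat bs ! i, concat bs ! j))
      $$ (sum_list (map length (take p bs)) + a, sum_list (map length (take q bs)) + c)
    = B $$ (bs ! p ! a, bs ! q ! c)"
proof -
  have "sum_list (map length (take p bs)) + a < N" "sum_list (map length (take q bs)) + c < N"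
    using sum_list_take_nth_le[OF assms(2), of length] sum_list_take_nth_le[OF assms(4), of length]
      assms by (simp_all add: length_concat)
  then show ?thesis
    using assms by (simp add: nth_concat_sum_list_take)
qed

lemma similar_block_upper_tri_of_partition:
  fixes B :: "'a :: field mat"
  assumes B: "B \<in> carrier_mat N N"
    and bs: "distinct (concat bs)" "set (concat bs) = {0..<N}"
    and Ds: "map dim_row Ds = map length bs" "\<And>D. D \<in> set Ds \<Longrightarrow> D \<in> carrier_mat (dim_row D) (dim_row D)"
    and diag: "\<And>p a c. p < length bs \<Longrightarrow> a < length (bs ! p) \<Longrightarrow> c < length (bs ! p) \<Longrightarrow>
      B $$ (bs ! p ! a, bs ! p ! c) = Ds ! p $$ (a, c)"
    and lower: "\<And>p q a c. p < length bs \<Longrightarrow> q < p \<Longrightarrow> a < length (bs ! p) \<Longrightarrow>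
      c < length (bs ! q) \<Longrightarrow> B $$ (bs ! p ! a, bs ! q ! c) = 0"
  shows "\<exists>T. similar_mat B T \<and> block_upper_tri T Ds"
proof -
  let ?xs = "concat bs" and ?ofs = "\<lambda>p. sum_list (map length (take p bs))"
  define T where "T = mat N N (\<lambda>(i, j). B $$ (?xs ! i, ?xs ! j))"
  have len: "length ?xs = N"
    using distinct_card[OF bs(1)] bs(2) by simp
  have lenDs: "length Ds = length bs" and dimDs: "p < length bs \<Longrightarrow> dim_row (Ds ! p) = length (bs ! p)" for p
    using Ds(1) by (metis length_map, metis length_map nth_map)
  have ofs: "sum_list (map dim_row (take p Ds)) = ?ofs p" for p
    by (metis Ds(1) take_map)
  have sum: "sum_list (map dim_row Ds) = N"
    using Ds(1) len by (simp add: length_concat)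
  have entry: "T $$ (?ofs p + a, ?ofs q + c) = B $$ (bs ! p ! a, bs ! q ! c)"
    if "p < length bs" "a < length (bs ! p)" "q < length bs" "c < length (bs ! q)" for p a q c
    unfolding T_def using len that by (rule reindex_concat_entry)
  have "block_upper_tri T Ds"
    unfolding block_upper_tri_def Let_def ofs sum
  proof (intro conjI allI impI ballI)
    show "D \<in> carrier_mat (dim_row D) (dim_row D)" if "D \<in> set Ds" for D
      using Ds(2) that .
    show "T \<in> carrier_mat N N"
      unfolding T_def by simp
  next
    fix p assume "p < length Ds"
    then have p: "p < length bs" using lenDs by simp
    have Dp: "Ds ! p \<in> carrier_mat (length (bs ! p)) (length (bs ! p))"
      using Ds(2)[OF nth_mem] dimDs p lenDs by fastforce
    show "blk T (?ofs p) (?ofs p) (dim_row (Ds ! p)) (dim_row (Ds ! p)) = Ds ! p"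
      using Dp p entry diag unfolding blk_def by (intro eq_matI) auto
  next
    fix p q assume p: "p < length Ds" and q: "q < p"
    then show "blk T (?ofs p) (?ofs q) (dim_row (Ds ! p)) (dim_row (Ds ! q)) =
        0\<^sub>m (dim_row (Ds ! p)) (dim_row (Ds ! q))"
      using lenDs dimDs entry lower unfolding blk_def by (intro eq_matI) auto
  qed
  then show ?thesis
    using similar_mat_reindex[OF B bs] unfolding T_def by blast
qed

section \<open>Coordinates adapted to the blocks of A\<close>

lemma diag_block_mat_entry:
  assumes "\<And>M. M \<in> set Ms \<Longrightarrow> dim_col M = dim_row M"
    and "p < length Ms" "q < length Ms" "a < dim_row (Ms ! p)" "c < dim_row (Ms ! q)"
  shows "diag_block_mat Ms $$ (sum_list (map dim_row (take p Ms)) + a, sum_list (map dim_row (take q Ms)) + c)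
    = (if p = q then Ms ! p $$ (a, c) else 0)"
  using assms
proof (induction Ms arbitrary: p q)
  case (Cons M Ms)
  have "map dim_col Ms = map dim_row Ms"
    using Cons.prems(1) by (intro map_cong) auto
  then have dims: "dim_row (diag_block_mat Ms) = sum_list (map dim_row Ms)"
      "dim_col (diag_block_mat Ms) = sum_list (map dim_row Ms)"
    by (simp_all only: dim_diag_block_mat)
  have M: "dim_col M = dim_row M"
    using Cons.prems(1) by simp
  have inside: "sum_list (map dim_row (take p Ms)) + a < sum_list (map dim_row Ms)"
    if "p < length Ms" "a < dim_row (Ms ! p)" for p a
    using sum_list_take_nth_le[OF that(1), of dim_row] that(2) by linarith
  show ?case
  proof (cases p; cases q)
    fix p' q' assume "p = Suc p'" "q = Suc q'"
    then show ?thesis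
      using Cons.prems Cons.IH[of p' q'] inside[of p'] inside[of q'] by (simp add: Let_def dims M)
  qed (use Cons.prems inside in \<open>auto simp: Let_def dims M\<close>)
qed simp

lemma J_blk_entry:
  assumes "l < i" "q < i" "a < k" "b < k"
  shows "J_blk i k $$ (l * k + a, q * k + b) = (if q = Suc l \<and> b = a then 1 else 0)"
  using assms mult_add_less[of l i a k] mult_add_less[of q i b k] mult_add_eq_iff[of a k b q "Suc l"]
  by (simp add: J_blk_def add.commute add.left_commute)

lemma blk_off_Suc: "blk_off n (Suc i) = blk_off n i + i * n i"
  by (cases i) (auto simp: blk_off_def)

lemma tot_size_eq_blk_off: "tot_size s n = blk_off n (Suc s)"
  unfolding tot_size_def blk_off_def by (simp add: atLeastLessThanSuc_atLeastAtMost)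

lemma blk_off_mono: "i \<le> j \<Longrightarrow> blk_off n i \<le> blk_off n j"
  unfolding blk_off_def by (rule sum_mono2) auto

definition J_blocks :: "nat \<Rightarrow> (nat \<Rightarrow> nat) \<Rightarrow> 'a :: {zero,one} mat list" where
  "J_blocks s n = map (\<lambda>i. J_blk i (n i)) [1..<s+1]"

lemma A_mat_J_blocks: "A_mat s n = diag_block_mat (J_blocks s n)"
  unfolding A_mat_def J_blocks_def ..

lemma length_J_blocks: "length (J_blocks s n) = s"
  unfolding J_blocks_def by (simp del: upt_Suc)

lemma nth_J_blocks: "p < s \<Longrightarrow> J_blocks s n ! p = J_blk (Suc p) (n (Suc p))"
  unfolding J_blocks_def by (simp del: upt_Suc)

lemma J_blocks_square: "M \<in> set (J_blocks s n) \<Longrightarrow> dim_col M = dim_row M"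
  unfolding J_blocks_def by (auto simp: J_blk_def simp del: upt_Suc)

lemma sum_list_take_J_blocks:
  assumes "p \<le> s"
  shows "sum_list (map dim_row (take p (J_blocks s n :: 'a :: {zero,one} mat list))) = blk_off n (Suc p)"
proof -
  have "take p [1..<s+1] = [1..<Suc p]"
    using take_upt[of 1 p "s + 1"] assms by (simp del: upt_Suc)
  then show ?thesis
    by (simp add: J_blocks_def take_map blk_off_def J_blk_def interv_sum_list_conv_sum_set_nat)
qed

lemma sum_list_J_blocks: "sum_list (map dim_row (J_blocks s n :: 'a :: {zero,one} mat list)) = tot_size s n"
proof -
  have "take s (J_blocks s n :: 'a mat list) = J_blocks s n"
    by (simp add: length_J_blocks)
  then show ?thesis
    using sum_list_take_J_blocks[of s s n, where 'a = 'a] unfolding tot_size_eq_blk_off by simp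
qed

lemma A_mat_carrier: "(A_mat s n :: 'a :: {zero,one} mat) \<in> carrier_mat (tot_size s n) (tot_size s n)"
proof -
  have "map dim_col (J_blocks s n :: 'a mat list) = map dim_row (J_blocks s n :: 'a mat list)"
    using J_blocks_square by (intro map_cong) auto
  then show ?thesis
    unfolding A_mat_J_blocks by (intro carrier_matI) (simp_all only: dim_diag_block_mat sum_list_J_blocks)
qed

(* The index of coordinate a of the sub-block l (counted from 0) of the diagonal block J_{i,n_i}(0). *)
definition pos :: "(nat \<Rightarrow> nat) \<Rightarrow> nat \<Rightarrow> nat \<Rightarrow> nat \<Rightarrow> nat" where
  "pos n i l a = blk_off n i + (l * n i + a)"

definition valid_pos :: "nat \<Rightarrow> (nat \<Rightarrow> nat) \<Rightarrow> nat \<Rightarrow> nat \<Rightarrow> nat \<Rightarrow> bool" where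
  "valid_pos s n i l a \<longleftrightarrow> 1 \<le> i \<and> i \<le> s \<and> l < i \<and> a < n i"

lemma pos_bounds:
  assumes "valid_pos s n i l a"
  shows "blk_off n i \<le> pos n i l a" "pos n i l a < blk_off n (Suc i)"
  using assms mult_add_less[of l i a "n i"] unfolding valid_pos_def pos_def blk_off_Suc by auto

lemma pos_less_tot_size:
  assumes "valid_pos s n i l a"
  shows "pos n i l a < tot_size s n"
proof -
  have "blk_off n (Suc i) \<le> blk_off n (Suc s)"
    using assms unfolding valid_pos_def by (intro blk_off_mono) auto
  then show ?thesis
    using pos_bounds(2)[OF assms] unfolding tot_size_eq_blk_off by linarith
qed

lemma blk_off_interval_unique:
  assumes "blk_off n i \<le> x" "x < blk_off n (Suc i)" "blk_off n j \<le> x" "x < blk_off n (Suc j)"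
  shows "i = j"
proof (rule ccontr)
  assume "i \<noteq> j"
  then have "Suc i \<le> j \<or> Suc j \<le> i" by linarith
  then show False
    using blk_off_mono[of "Suc i" j n] blk_off_mono[of "Suc j" i n] assms by auto
qed

lemma pos_inj:
  assumes v: "valid_pos s n i l a" and w: "valid_pos s n j q b" and eq: "pos n i l a = pos n j q b"
  shows "j = i \<and> q = l \<and> b = a"
proof -
  have "j = i"
    using blk_off_interval_unique pos_bounds[OF v] pos_bounds[OF w] eq by metis
  then show ?thesis
    using v w eq mult_add_eq_iff[of a "n i" b q l] unfolding valid_pos_def pos_def by auto
qed

lemma pos_surj:
  assumes x: "x < tot_size s n"
  obtains i l a where "valid_pos s n i l a" "x = pos n i l a"
proof -
  let ?Js = "J_blocks s n :: nat mat list"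
  have "x < sum_list (map dim_row ?Js)"
    using x by (simp only: sum_list_J_blocks)
  then obtain p where "p < length ?Js" "sum_list (map dim_row (take p ?Js)) \<le> x"
    "x < sum_list (map dim_row (take p ?Js)) + dim_row (?Js ! p)"
    by (rule obtain_block_containing)
  then have p: "p < s" "blk_off n (Suc p) \<le> x" "x < blk_off n (Suc p) + Suc p * n (Suc p)"
    by (simp_all add: length_J_blocks nth_J_blocks sum_list_take_J_blocks J_blk_def)
  define i where "i = Suc p"
  define r where "r = x - blk_off n i"
  have r: "r < i * n i"
    using p unfolding r_def i_def by simp
  then have n: "0 < n i"
    by (cases "n i") auto
  have "r div n i < i" "r mod n i < n i"
    using r n by (simp_all add: div_less_iff_less_mult)
  then have "valid_pos s n i (r div n i) (r mod n i)"
    using p(1) unfolding valid_pos_def i_def by simp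
  moreover have "x = pos n i (r div n i) (r mod n i)"
    using p(2) div_mult_mod_eq[of r "n i"] unfolding pos_def r_def i_def by linarith
  ultimately show thesis by (rule that)
qed

lemma A_mat_pos:
  assumes v: "valid_pos s n i l a" and w: "valid_pos s n j q b"
  shows "(A_mat s n :: 'a :: {zero,one} mat) $$ (pos n i l a, pos n j q b) = (if j = i \<and> q = Suc l \<and> b = a then 1 else 0)"
proof -
  let ?Js = "J_blocks s n :: 'a mat list"
  have i: "i - 1 < s" "Suc (i - 1) = i" and j: "j - 1 < s" "Suc (j - 1) = j"
    using v w unfolding valid_pos_def by auto
  have "A_mat s n $$ (pos n i l a, pos n j q b) =
      (if i - 1 = j - 1 then ?Js ! (i - 1) $$ (l * n i + a, q * n j + b) else 0)"
    using diag_block_mat_entry[of ?Js "i - 1" "j - 1" "l * n i + a" "q * n j + b"] i j v w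
      mult_add_less[of l i a "n i"] mult_add_less[of q j b "n j"]
    by (simp add: A_mat_J_blocks J_blocks_square length_J_blocks nth_J_blocks sum_list_take_J_blocks
        J_blk_def pos_def valid_pos_def)
  also have "\<dots> = (if j = i then J_blk i (n i) $$ (l * n i + a, q * n i + b) else 0)"
    using i j by (auto simp: nth_J_blocks)
  also have "\<dots> = (if j = i \<and> q = Suc l \<and> b = a then 1 else 0)"
    using v w J_blk_entry[of l i q a "n i" b] by (auto simp: valid_pos_def)
  finally show ?thesis .
qed

lemma A_mat_row:
  assumes v: "valid_pos s n i l a" and y: "y < tot_size s n"
  shows "(A_mat s n :: 'a :: {zero,one} mat) $$ (pos n i l a, y) =
    (if Suc l < i \<and> y = pos n i (Suc l) a then 1 else 0)"
proof -
  obtain j q b where w: "valid_pos s n j q b" and y: "y = pos n j q b"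
    using pos_surj[OF y] .
  have "(Suc l < i \<and> y = pos n i (Suc l) a) \<longleftrightarrow> (j = i \<and> q = Suc l \<and> b = a)"
    using pos_inj[OF _ w, of i "Suc l" a] v w unfolding y valid_pos_def by auto
  then show ?thesis
    using A_mat_pos[OF v w] y by simp
qed

lemma A_mat_col:
  assumes w: "valid_pos s n j q b" and x: "x < tot_size s n"
  shows "(A_mat s n :: 'a :: {zero,one} mat) $$ (x, pos n j q b) =
    (if 0 < q \<and> x = pos n j (q - 1) b then 1 else 0)"
proof -
  obtain i l a where v: "valid_pos s n i l a" and x: "x = pos n i l a"
    using pos_surj[OF x] .
  have "(0 < q \<and> x = pos n j (q - 1) b) \<longleftrightarrow> (j = i \<and> q = Suc l \<and> b = a)"
    using pos_inj[OF _ v, of j "q - 1" b] v w unfolding x valid_pos_def by auto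
  then show ?thesis
    using A_mat_pos[OF v w] x by simp
qed

lemma A_mat_mult_pos:
  fixes B :: "'a :: comm_ring_1 mat"
  assumes B: "B \<in> carrier_mat (tot_size s n) (tot_size s n)"
    and v: "valid_pos s n i l a" and y: "y < tot_size s n"
  shows "(A_mat s n * B) $$ (pos n i l a, y) = (if Suc l < i then B $$ (pos n i (Suc l) a, y) else 0)"
proof -
  let ?N = "tot_size s n"
  have "(A_mat s n * B) $$ (pos n i l a, y) = (\<Sum>k<?N. A_mat s n $$ (pos n i l a, k) * B $$ (k, y))"
    using B y pos_less_tot_size[OF v] A_mat_carrier[of s n, where 'a = 'a]
    by (simp add: scalar_prod_def atLeast0LessThan)
  also have "\<dots> = (\<Sum>k<?N. if Suc l < i \<and> k = pos n i (Suc l) a then B $$ (k, y) else 0)"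
    by (rule sum.cong) (simp_all add: A_mat_row[OF v])
  also have "\<dots> = (if Suc l < i then B $$ (pos n i (Suc l) a, y) else 0)"
  proof -
    have "Suc l < i \<Longrightarrow> valid_pos s n i (Suc l) a"
      using v unfolding valid_pos_def by auto
    then show ?thesis
      using pos_less_tot_size by auto
  qed
  finally show ?thesis .
qed

lemma mult_A_mat_pos:
  fixes B :: "'a :: comm_ring_1 mat"
  assumes B: "B \<in> carrier_mat (tot_size s n) (tot_size s n)"
    and w: "valid_pos s n j q b" and x: "x < tot_size s n"
  shows "(B * A_mat s n) $$ (x, pos n j q b) = (if 0 < q then B $$ (x, pos n j (q - 1) b) else 0)"
proof -
  let ?N = "tot_size s n"
  have "(B * A_mat s n) $$ (x, pos n j q b) = (\<Sum>k<?N. B $$ (x, k) * A_mat s n $$ (k, pos n j q b))"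
    using B x pos_less_tot_size[OF w] A_mat_carrier[of s n, where 'a = 'a]
    by (simp add: scalar_prod_def atLeast0LessThan)
  also have "\<dots> = (\<Sum>k<?N. if 0 < q \<and> k = pos n j (q - 1) b then B $$ (x, k) else 0)"
    by (rule sum.cong) (simp_all add: A_mat_col[OF w])
  also have "\<dots> = (if 0 < q then B $$ (x, pos n j (q - 1) b) else 0)"
  proof -
    have "0 < q \<Longrightarrow> valid_pos s n j (q - 1) b"
      using w unfolding valid_pos_def by auto
    then show ?thesis
      using pos_less_tot_size by auto
  qed
  finally show ?thesis .
qed

section \<open>The anticommutation relations\<close>

(* Entry (pos n i l a, pos n j q b) of A B + B A, a term vanishing when its sub-block index leaves
   the block. *)
definition anticomm_rel :: "nat \<Rightarrow> (nat \<Rightarrow> nat) \<Rightarrow> 'a :: comm_ring_1 mat \<Rightarrow> bool" where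
  "anticomm_rel s n B \<longleftrightarrow> (\<forall>i l a j q b. valid_pos s n i l a \<longrightarrow> valid_pos s n j q b \<longrightarrow>
     (if Suc l < i then B $$ (pos n i (Suc l) a, pos n j q b) else 0)
     + (if 0 < q then B $$ (pos n i l a, pos n j (q - 1) b) else 0) = 0)"

lemma anticomm_relD:
  "anticomm_rel s n B \<Longrightarrow> valid_pos s n i l a \<Longrightarrow> valid_pos s n j q b \<Longrightarrow>
     (if Suc l < i then B $$ (pos n i (Suc l) a, pos n j q b) else 0)
     + (if 0 < q then B $$ (pos n i l a, pos n j (q - 1) b) else 0) = 0"
  unfolding anticomm_rel_def by blast

lemma anticomm_rel_of_anticomm:
  fixes B :: "'a :: comm_ring_1 mat"
  assumes B: "B \<in> carrier_mat (tot_size s n) (tot_size s n)"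
    and anticomm: "A_mat s n * B + B * A_mat s n = 0\<^sub>m (tot_size s n) (tot_size s n)"
  shows "anticomm_rel s n B"
  unfolding anticomm_rel_def
proof (intro allI impI)
  fix i l a j q b assume v: "valid_pos s n i l a" and w: "valid_pos s n j q b"
  have x: "pos n i l a < tot_size s n" and y: "pos n j q b < tot_size s n"
    using pos_less_tot_size v w by blast+
  have "(A_mat s n * B + B * A_mat s n) $$ (pos n i l a, pos n j q b) = 0"
    using anticomm x y by simp
  then show "(if Suc l < i then B $$ (pos n i (Suc l) a, pos n j q b) else 0)
     + (if 0 < q then B $$ (pos n i l a, pos n j (q - 1) b) else 0) = 0"
    using B x y A_mat_carrier[of s n, where 'a = 'a]
    by (simp add: A_mat_mult_pos[OF B v y] mult_A_mat_pos[OF B w x])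
qed

lemma anticomm_rel_shift:
  assumes r: "anticomm_rel s n B" and v: "valid_pos s n i (Suc p) a" and w: "valid_pos s n j (Suc q) b"
  shows "B $$ (pos n i (Suc p) a, pos n j (Suc q) b) = - B $$ (pos n i p a, pos n j q b)"
proof -
  have v': "valid_pos s n i p a" and "Suc p < i"
    using v unfolding valid_pos_def by auto
  then show ?thesis
    using anticomm_relD[OF r v' w] by (simp add: eq_neg_iff_add_eq_0)
qed

lemma anticomm_rel_zero_if_less:
  assumes r: "anticomm_rel s n B"
  shows "valid_pos s n i p a \<Longrightarrow> valid_pos s n j q b \<Longrightarrow> q < p \<Longrightarrow> B $$ (pos n i p a, pos n j q b) = 0"
proof (induction q arbitrary: p)
  case 0
  then obtain p' where p: "p = Suc p'" by (cases p) auto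
  have v: "valid_pos s n i p' a" and "Suc p' < i"
    using 0 p unfolding valid_pos_def by auto
  then show ?case
    using anticomm_relD[OF r v "0.prems"(2)] p by simp
next
  case (Suc q)
  then obtain p' where p: "p = Suc p'" by (cases p) auto
  have "valid_pos s n i p' a" "valid_pos s n j q b" "q < p'"
    using Suc.prems p unfolding valid_pos_def by auto
  then show ?case
    using anticomm_rel_shift[OF r] Suc.prems Suc.IH unfolding p by simp
qed

lemma anticomm_rel_zero_if_add_less:
  assumes r: "anticomm_rel s n B"
  shows "valid_pos s n i p a \<Longrightarrow> valid_pos s n j q b \<Longrightarrow> q + i < p + j \<Longrightarrow>
    B $$ (pos n i p a, pos n j q b) = 0"
proof (induction "i - Suc p" arbitrary: p q)
  case 0
  then have "Suc p = i" and w: "valid_pos s n j (Suc q) b"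
    unfolding valid_pos_def by auto
  then show ?case
    using anticomm_relD[OF r "0.prems"(1) w] by simp
next
  case (Suc d)
  have "valid_pos s n i (Suc p) a" "valid_pos s n j (Suc q) b"
    using Suc.prems Suc.hyps unfolding valid_pos_def by auto
  moreover have "B $$ (pos n i (Suc p) a, pos n j (Suc q) b) = 0"
    using Suc.hyps Suc.prems calculation by (intro Suc.hyps(1)) auto
  ultimately show ?case
    using anticomm_rel_shift[OF r] by simp
qed

lemma anticomm_rel_diag:
  assumes r: "anticomm_rel s n B"
  shows "valid_pos s n i p a \<Longrightarrow> valid_pos s n i p b \<Longrightarrow> B $$ (pos n i p a, pos n i p b) =
    (if even p then B $$ (pos n i 0 a, pos n i 0 b) else - B $$ (pos n i 0 a, pos n i 0 b))"
proof (induction p)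
  case (Suc p)
  have "valid_pos s n i p a" "valid_pos s n i p b"
    using Suc.prems unfolding valid_pos_def by auto
  then show ?case
    using anticomm_rel_shift[OF r Suc.prems] Suc.IH by simp
qed simp

lemma anticomm_rel_zero_of_earlier:
  assumes r: "anticomm_rel s n B" and v: "valid_pos s n i l a" and w: "valid_pos s n j m c"
    and key: "2 * m + (s - j) \<le> 2 * l + (s - i)" and ne: "(j, m) \<noteq> (i, l)"
  shows "B $$ (pos n i l a, pos n j m c) = 0"
proof (cases "m < l \<or> m + i < l + j")
  case True
  then show ?thesis
    using anticomm_rel_zero_if_less[OF r v w] anticomm_rel_zero_if_add_less[OF r v w] by blast
next
  case False
  then have "j = i \<and> m = l"
    using key v w unfolding valid_pos_def by linarith
  with ne show ?thesis by simp
qed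

lemma anticomm_rel_diag_block:
  assumes r: "anticomm_rel s n B" and v: "valid_pos s n i l a" and w: "valid_pos s n i l c"
  shows "B $$ (pos n i l a, pos n i l c) = (if even l then B_one B n i else - B_one B n i) $$ (a, c)"
  using anticomm_rel_diag[OF r v w] v w unfolding valid_pos_def by (simp add: B_one_def blk_def pos_def)

section \<open>Reordering the sub-blocks\<close>

definition sub_blocks :: "nat \<Rightarrow> (nat \<times> nat) list" where
  "sub_blocks s = concat (map (\<lambda>i. map (Pair i) [0..<i]) [1..<Suc s])"

lemma sub_blocks_Suc: "sub_blocks (Suc s) = sub_blocks s @ map (Pair (Suc s)) [0..<Suc s]"
  unfolding sub_blocks_def by simp

lemma set_sub_blocks: "set (sub_blocks s) = {(i, l). 1 \<le> i \<and> i \<le> s \<and> l < i}"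
  unfolding sub_blocks_def by auto

lemma distinct_sub_blocks: "distinct (sub_blocks s)"
proof (induction s)
  case (Suc s)
  then show ?case by (auto simp: sub_blocks_Suc set_sub_blocks distinct_map inj_on_def)
qed (simp add: sub_blocks_def)

lemma sum_list_sub_blocks: "sum_list (map (\<lambda>(i, l). n i) (sub_blocks s)) = tot_size s n"
proof (induction s)
  case (Suc s)
  then show ?case by (simp add: sub_blocks_Suc tot_size_eq_blk_off blk_off_Suc sum_list_triv o_def)
qed (simp add: sub_blocks_def tot_size_def)

lemma mset_alternating:
  "mset (map (\<lambda>l. if even l then x else y) [0..<k]) =
    replicate_mset ((k + 1) div 2) x + replicate_mset (k div 2) y"
proof (induction k)
  case (Suc k)
  show ?case
  proof (cases "even k")
    case True
    then have "(Suc k + 1) div 2 = Suc ((k + 1) div 2)" "Suc k div 2 = k div 2" by presburger+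
    then show ?thesis using Suc True by (simp add: ac_simps)
  next
    case False
    then have "(Suc k + 1) div 2 = (k + 1) div 2" "Suc k div 2 = Suc (k div 2)" by presburger+
    then show ?thesis using Suc False by (simp add: ac_simps)
  qed
qed simp

lemma mset_sub_blocks_alternating:
  "mset (map (\<lambda>(i, l). if even l then X i else Y i) (sub_blocks s)) =
    (\<Sum>i\<in>{1..s}. replicate_mset ((i + 1) div 2) (X i) + replicate_mset (i div 2) (Y i))"
proof (induction s)
  case (Suc s)
  have "mset (map (\<lambda>(i, l). if even l then X i else Y i) (map (Pair (Suc s)) [0..<Suc s])) =
      replicate_mset ((Suc s + 1) div 2) (X (Suc s)) + replicate_mset (Suc s div 2) (Y (Suc s))"
    unfolding map_map o_def split by (rule mset_alternating)
  then show ?case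
    using Suc by (simp add: sub_blocks_Suc sum.cl_ivl_Suc)
qed (simp add: sub_blocks_def)

definition sub_block_positions :: "(nat \<Rightarrow> nat) \<Rightarrow> nat \<times> nat \<Rightarrow> nat list" where
  "sub_block_positions n = (\<lambda>(i, l). map (pos n i l) [0..<n i])"

lemma sub_block_positions_partition:
  assumes L: "mset L = mset (sub_blocks s)"
  shows "distinct (concat (map (sub_block_positions n) L))"
    and "set (concat (map (sub_block_positions n) L)) = {0..<tot_size s n}"
proof -
  let ?xs = "concat (map (sub_block_positions n) L)"
  have setL: "set L = {(i, l). 1 \<le> i \<and> i \<le> s \<and> l < i}"
    using mset_eq_setD[OF L] set_sub_blocks by simp
  show set_eq: "set ?xs = {0..<tot_size s n}"
  proof (intro equalityI subsetI)
    fix x assume "x \<in> set ?xs"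
    then obtain i l a where "(i, l) \<in> set L" "a < n i" and x: "x = pos n i l a"
      unfolding sub_block_positions_def by auto
    then have "valid_pos s n i l a"
      unfolding setL valid_pos_def by auto
    then show "x \<in> {0..<tot_size s n}"
      using pos_less_tot_size x by simp
  next
    fix x assume "x \<in> {0..<tot_size s n}"
    then obtain i l a where v: "valid_pos s n i l a" and x: "x = pos n i l a"
      using pos_surj[of x s n] by auto
    then have "(i, l) \<in> set L" "x \<in> set (sub_block_positions n (i, l))"
      unfolding setL valid_pos_def by (simp_all add: sub_block_positions_def)
    then show "x \<in> set ?xs"
      by auto
  qed
  have "length ?xs = sum_list (map (\<lambda>(i, l). n i) L)"
    by (simp add: length_concat sub_block_positions_def case_prod_unfold o_def)
  also have "\<dots> = sum_list (map (\<lambda>(i, l). n i) (sub_blocks s))"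
    unfolding sum_mset_sum_list[symmetric] mset_map L ..
  finally have "length ?xs = tot_size s n"
    by (simp add: sum_list_sub_blocks)
  then show "distinct ?xs"
    using set_eq by (intro card_distinct) simp
qed

(* Sorting by 2 l - i puts every entry permitted by the relations on or above the block diagonal. *)
definition ordered_sub_blocks :: "nat \<Rightarrow> (nat \<times> nat) list" where
  "ordered_sub_blocks s = sort_key (\<lambda>(i, l). 2 * l + (s - i)) (sub_blocks s)"

lemma mset_ordered_sub_blocks: "mset (ordered_sub_blocks s) = mset (sub_blocks s)"
  unfolding ordered_sub_blocks_def by simp

lemma ordered_sub_blocks_earlier:
  assumes "q < p" "p < length (ordered_sub_blocks s)"
    and "ordered_sub_blocks s ! p = (i, l)" "ordered_sub_blocks s ! q = (j, m)"
  shows "2 * m + (s - j) \<le> 2 * l + (s - i)" "(j, m) \<noteq> (i, l)"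
proof -
  let ?key = "\<lambda>(i, l). 2 * l + (s - i)" and ?L = "ordered_sub_blocks s"
  have "sorted (map ?key ?L)" "distinct ?L"
    using distinct_sub_blocks unfolding ordered_sub_blocks_def by simp_all
  then have "?key (?L ! q) \<le> ?key (?L ! p)" "?L ! q \<noteq> ?L ! p"
    using assms(1,2) sorted_nth_mono[of "map ?key ?L" q p] nth_eq_iff_index_eq[of ?L q p] by auto
  then show "2 * m + (s - j) \<le> 2 * l + (s - i)" "(j, m) \<noteq> (i, l)"
    using assms(3,4) by simp_all
qed

lemma anticomm_rel_similar_block_upper_tri:
  fixes B :: "'a :: field mat"
  assumes B: "B \<in> carrier_mat (tot_size s n) (tot_size s n)" and r: "anticomm_rel s n B"
  shows "\<exists>T Ds. similar_mat B T \<and> block_upper_tri T Ds \<and>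
    mset Ds = (\<Sum>i\<in>{1..s}. replicate_mset ((i + 1) div 2) (B_one B n i)
                          + replicate_mset (i div 2) (- B_one B n i))"
proof -
  define L where "L = ordered_sub_blocks s"
  define D where "D = (\<lambda>(i, l :: nat). if even l then B_one B n i else - B_one B n i)"
  let ?bs = "map (sub_block_positions n) L"
  have mL: "mset L = mset (sub_blocks s)"
    unfolding L_def by (rule mset_ordered_sub_blocks)
  have valid: "valid_pos s n i l a" if "p < length L" "L ! p = (i, l)" "a < n i" for p i l a
    using that nth_mem[of p L] mset_eq_setD[OF mL] unfolding set_sub_blocks valid_pos_def by auto
  have bs: "length (?bs ! p) = n i" "a < n i \<Longrightarrow> ?bs ! p ! a = pos n i l a"
    if "p < length L" "L ! p = (i, l)" for p i l a
    using that by (simp_all add: sub_block_positions_def)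
  have "mset (map D L) = mset (map D (sub_blocks s))"
    by (simp only: mset_map mL)
  then have "mset (map D L) = (\<Sum>i\<in>{1..s}. replicate_mset ((i + 1) div 2) (B_one B n i)
                          + replicate_mset (i div 2) (- B_one B n i))"
    unfolding D_def mset_sub_blocks_alternating .
  moreover have "\<exists>T. similar_mat B T \<and> block_upper_tri T (map D L)"
  proof (rule similar_block_upper_tri_of_partition[OF B sub_block_positions_partition[OF mL]])
    show "map dim_row (map D L) = map length ?bs"
      by (simp add: D_def sub_block_positions_def B_one_def blk_def case_prod_unfold)
    show "D' \<in> carrier_mat (dim_row D') (dim_row D')" if "D' \<in> set (map D L)" for D'
      using that by (auto simp: D_def B_one_def blk_def)
  next
    fix p a c assume "p < length ?bs" "a < length (?bs ! p)" "c < length (?bs ! p)"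
    moreover obtain i l where "L ! p = (i, l)" by fastforce
    ultimately show "B $$ (?bs ! p ! a, ?bs ! p ! c) = map D L ! p $$ (a, c)"
      using anticomm_rel_diag_block[OF r] valid bs by (auto simp: D_def)
  next
    fix p q a c assume "p < length ?bs" "q < p" "a < length (?bs ! p)" "c < length (?bs ! q)"
    moreover obtain i l j m where ij: "L ! p = (i, l)" "L ! q = (j, m)" by fastforce
    ultimately have p: "p < length L" "a < n i" and q: "q < length L" "c < n j" and "q < p"
      using bs(1)[of p i l] bs(1)[of q j m] by auto
    show "B $$ (?bs ! p ! a, ?bs ! q ! c) = 0"
      using anticomm_rel_zero_of_earlier[OF r valid[OF p(1) ij(1) p(2)] valid[OF q(1) ij(2) q(2)]]
        ordered_sub_blocks_earlier[OF \<open>q < p\<close> p(1)[unfolded L_def] ij[unfolded L_def]]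
        bs(2)[OF p(1) ij(1) p(2)] bs(2)[OF q(1) ij(2) q(2)]
      by simp
  qed
  ultimately show ?thesis by blast
qed

section \<open>Characteristic polynomials\<close>

lemma prod_mset_image_replicate_sum:
  "finite I \<Longrightarrow> prod_mset (image_mset g (\<Sum>i\<in>I. replicate_mset (k i) (x i) + replicate_mset (m i) (y i)))
     = (\<Prod>i\<in>I. g (x i) ^ k i * g (y i) ^ m i)"
  by (induction I rule: finite_induct) (simp_all add: ac_simps)

lemma char_poly_anticomm_rel:
  fixes B :: "'a :: field mat"
  assumes B: "B \<in> carrier_mat (tot_size s n) (tot_size s n)" and r: "anticomm_rel s n B"
  shows "char_poly B = (\<Prod>i\<in>{1..s}. char_poly (B_one B n i) ^ ((i + 1) div 2)
                                     * char_poly (- B_one B n i) ^ (i div 2))"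
proof -
  obtain T Ds where sim: "similar_mat B T" and tri: "block_upper_tri T Ds"
    and Ds: "mset Ds = (\<Sum>i\<in>{1..s}. replicate_mset ((i + 1) div 2) (B_one B n i)
                                  + replicate_mset (i div 2) (- B_one B n i))"
    using anticomm_rel_similar_block_upper_tri[OF B r] by blast
  have "char_poly B = char_poly T"
    using sim by (rule char_poly_similar)
  also have "\<dots> = prod_list (map char_poly Ds)"
    using tri by (rule char_poly_block_upper_tri)
  also have "\<dots> = prod_mset (image_mset char_poly (mset Ds))"
    unfolding prod_mset_prod_list[symmetric] mset_map ..
  also have "\<dots> = (\<Prod>i\<in>{1..s}. char_poly (B_one B n i) ^ ((i + 1) div 2)
                                     * char_poly (- B_one B n i) ^ (i div 2))"
    unfolding Ds by (rule prod_mset_image_replicate_sum) simp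
  finally show ?thesis .
qed

lemma anticomm_rel_B_diag:
  assumes r: "anticomm_rel s n B" and i: "1 \<le> i" "i \<le> s"
  shows "anticomm_rel i (\<lambda>j. if j = i then n i else 0) (B_diag B n i)"
  unfolding anticomm_rel_def
proof (intro allI impI)
  let ?n = "\<lambda>j. if j = i then n i else 0"
  have off: "blk_off ?n i = 0"
    unfolding blk_off_def by (rule sum.neutral) auto
  have valid: "j = i \<and> valid_pos s n i l a" if "valid_pos i ?n j l a" for j l a
    using that i unfolding valid_pos_def by (auto split: if_splits)
  have entry: "B_diag B n i $$ (pos ?n i l a, pos ?n i q b) = B $$ (pos n i l a, pos n i q b)"
    if "l < i" "q < i" "a < n i" "b < n i" for l q a b
    using that mult_add_less[of l i a "n i"] mult_add_less[of q i b "n i"]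
    by (simp add: B_diag_def blk_def pos_def off add.assoc)
  fix j l a j' q b assume v: "valid_pos i ?n j l a" and w: "valid_pos i ?n j' q b"
  then have j: "j = i" "j' = i" and v': "valid_pos s n i l a" and w': "valid_pos s n i q b"
    using valid by blast+
  then have "l < i" "q < i" "a < n i" "b < n i"
    unfolding valid_pos_def by auto
  then show "(if Suc l < j then B_diag B n i $$ (pos ?n j (Suc l) a, pos ?n j' q b) else 0)
     + (if 0 < q then B_diag B n i $$ (pos ?n j l a, pos ?n j' (q - 1) b) else 0) = 0"
    using anticomm_relD[OF r v' w'] entry unfolding j by auto
qed

lemma char_poly_B_diag:
  fixes B :: "'a :: field mat"
  assumes r: "anticomm_rel s n B" and i: "1 \<le> i" "i \<le> s"
  shows "char_poly (B_diag B n i) =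
    char_poly (B_one B n i) ^ ((i + 1) div 2) * char_poly (- B_one B n i) ^ (i div 2)"
proof -
  \<comment> \<open>\<open>B_ii\<close> is the matrix of this shape for the single block \<open>i\<close>.\<close>
  let ?n = "\<lambda>j. if j = i then n i else 0"
  let ?B = "B_diag B n i"
  have "tot_size i ?n = (\<Sum>j\<in>{1..i}. if j = i then i * n i else 0)"
    unfolding tot_size_def by (rule sum.cong) auto
  then have tot: "tot_size i ?n = i * n i"
    using i by simp
  have "?B \<in> carrier_mat (tot_size i ?n) (tot_size i ?n)"
    unfolding tot B_diag_def blk_def by simp
  then have "char_poly ?B = (\<Prod>j\<in>{1..i}. char_poly (B_one ?B ?n j) ^ ((j + 1) div 2)
                                     * char_poly (- B_one ?B ?n j) ^ (j div 2))"
    using anticomm_rel_B_diag[OF r i] by (rule char_poly_anticomm_rel)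
  also have "\<dots> = (\<Prod>j\<in>{1..i}. if j = i then char_poly (B_one B n i) ^ ((i + 1) div 2)
                                     * char_poly (- B_one B n i) ^ (i div 2) else 1)"
  proof (rule prod.cong)
    fix j assume "j \<in> {1..i}"
    have "blk_off ?n i = 0"
      unfolding blk_off_def by (rule sum.neutral) auto
    moreover have "n i \<le> i * n i"
      using i by simp
    ultimately have "B_one ?B ?n i = B_one B n i"
      unfolding B_one_def B_diag_def by (simp add: blk_blk)
    moreover have "j \<noteq> i \<Longrightarrow> B_one ?B ?n j \<in> carrier_mat 0 0"
      unfolding B_one_def blk_def by simp
    ultimately show "char_poly (B_one ?B ?n j) ^ ((j + 1) div 2) * char_poly (- B_one ?B ?n j) ^ (j div 2) =
      (if j = i then char_poly (B_one B n i) ^ ((i + 1) div 2) * char_poly (- B_one B n i) ^ (i div 2) else 1)"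
      by (auto simp: char_poly_carrier_0)
  qed simp
  also have "\<dots> = char_poly (B_one B n i) ^ ((i + 1) div 2) * char_poly (- B_one B n i) ^ (i div 2)"
    using i by simp
  finally show ?thesis .
qed

theorem lemma4p8:
  fixes s :: nat and n :: "nat \<Rightarrow> nat" and B :: "'a :: field mat"
  assumes "B \<in> carrier_mat (tot_size s n) (tot_size s n)"
    and "A_mat s n * B + B * A_mat s n = 0\<^sub>m (tot_size s n) (tot_size s n)"
  shows "(\<exists>T Ds. similar_mat B T \<and> block_upper_tri T Ds \<and>
            mset Ds = (\<Sum>i\<in>{1..s}. replicate_mset ((i + 1) div 2) (B_one B n i)
                                   + replicate_mset (i div 2) (- B_one B n i)))
         \<and> char_poly B = (\<Prod>i\<in>{1..s}. char_poly (B_diag B n i))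
         \<and> char_poly B = (\<Prod>i\<in>{1..s}. char_poly (B_one B n i) ^ ((i + 1) div 2)
                                     * char_poly (- B_one B n i) ^ (i div 2))"
proof -
  have r: "anticomm_rel s n B"
    using assms by (rule anticomm_rel_of_anticomm)
  have "(\<Prod>i\<in>{1..s}. char_poly (B_diag B n i)) = (\<Prod>i\<in>{1..s}. char_poly (B_one B n i) ^ ((i + 1) div 2)
                                     * char_poly (- B_one B n i) ^ (i div 2))"
    using char_poly_B_diag[OF r] by (intro prod.cong) auto
  then show ?thesis
    using anticomm_rel_similar_block_upper_tri[OF assms(1) r] char_poly_anticomm_rel[OF assms(1) r] by simp
qed

end
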